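(* Let $G$ be a finite group, let $K$ be a normal solvable subgroup of $G$, and let $p \in \pi(G)$. If $d_G(p) < |L(p,G)|$, then $p \notin \pi(K)$.
   Context: For a finite group $X$, $\pi(X)$ is the set of prime divisors of $|X|$. The prime graph $GK(G)$ of $G$ has vertex set $\pi(G)$, with distinct vertices $p,q$ adjacent iff $G$ contains an element of order $pq$; $d_G(p)$ denotes the degree of the vertex $p$ in $GK(G)$. For $p \in \pi(G)$, $w_G(p) = \max\{ i : p^i \mid |G|\}$. For a positive integer $m$, $[m] = \operatorname{lcm}(1,2,\dots,m)$. For $p\in\pi(G)$, define $$L(p,G) = \{ q \in \pi(G)\setminus\{p\} \;:\; p \nmid q^{n}-1 \text{ and } q \nmid p^{\gcd([m],\,q-1)}-1, \text{ where } m = w_G(p),\ n = w_G(q)\}.$$ *)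

theory Defs
  imports "HOL-Algebra.Algebra" "HOL-Computational_Algebra.Primes"
begin

definition prime_set :: "('a, 'b) monoid_scheme \<Rightarrow> nat set" where
  "prime_set H = {p. Factorial_Ring.prime p \<and> p dvd card (carrier H)}"

definition gk_adj :: "('a, 'b) monoid_scheme \<Rightarrow> nat \<Rightarrow> nat \<Rightarrow> bool" where
  "gk_adj G p q \<longleftrightarrow> p \<in> prime_set G \<and> q \<in> prime_set G \<and> p \<noteq> q \<and>
     (\<exists>x \<in> carrier G. group.ord G x = p * q)"

definition gk_deg :: "('a, 'b) monoid_scheme \<Rightarrow> nat \<Rightarrow> nat" where
  "gk_deg G p = card {q. gk_adj G p q}"

definition w_exp :: "('a, 'b) monoid_scheme \<Rightarrow> nat \<Rightarrow> nat" where
  "w_exp G p = multiplicity p (card (carrier G))"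

definition lcm_upto :: "nat \<Rightarrow> nat" where
  "lcm_upto m = Lcm {1..m}"

definition L_set :: "nat \<Rightarrow> ('a, 'b) monoid_scheme \<Rightarrow> nat set" where
  "L_set p G = {q \<in> prime_set G - {p}.
      \<not> p dvd (q ^ w_exp G q - 1) \<and>
      \<not> q dvd (p ^ gcd (lcm_upto (w_exp G p)) (q - 1) - 1)}"

end

theory Submission
  imports Defs "HOL-Number_Theory.Residues"
begin

(* Assume p divides |K|. For every q in L(p,G) we find an element of order pq in G; then
   L(p,G) lies in the neighbourhood of p in GK(G), contradicting d_G(p) < |L(p,G)|.

   The element is found by climbing inside K through normal subgroups N of G with p dividing
   |K:N| and p not dividing q^(w_q(G:N)) - 1. Solvability of K/N yields a nontrivial normal
   r-subgroup S of G/N inside K/N. An element of prime order t of G/N acting on S by conjugation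
   either centralises some s <> 1 of S, and its product with s has order divisible by r t, or it
   acts fixed-point-freely on S - {1}, and then t divides |S| - 1.
   For r = p the acting q-element cannot be fixed-point-free, since q does not divide p^k - 1
   for 1 <= k <= w_G(p) (this is what the gcd with [w_G(p)] encodes). For r = q a fixed-point-free
   p-element forces p | q^j - 1; then, as for r not in {p, q}, both conditions pass from N to
   the preimage of S, and we continue there. Element orders of G/N lift to G. *)

hide_const (open) Divisibility.prime

section \<open>Arithmetic of \<open>q ^ n - 1\<close>\<close>

lemma dvd_power_add_sub_one:
  fixes p q :: nat
  assumes "p dvd q ^ a - 1" and "p dvd q ^ b - 1"
  shows "p dvd q ^ (a + b) - 1"
proof (cases "q = 0")
  case False
  then have "[q ^ a = 1] (mod p)" and "[q ^ b = 1] (mod p)"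
    using assms by (simp_all add: cong_altdef_nat)
  then have "[q ^ a * q ^ b = 1 * 1] (mod p)" by (rule cong_mult)
  with False show ?thesis by (simp add: cong_altdef_nat power_add)
qed (simp add: power_0_left)

lemma cong_power_gcd_eq_one:
  fixes a n :: nat
  assumes "[a ^ m = 1] (mod n)" and "[a ^ k = 1] (mod n)"
  shows "[a ^ gcd m k = 1] (mod n)"
proof (cases "m = 0")
  case False
  obtain x y where bezout: "m * x = k * y + gcd m k" using bezout_nat[OF False] by blast
  have "[a ^ (k * y) * a ^ gcd m k = a ^ (m * x)] (mod n)"
    by (simp add: bezout power_add)
  also have "[a ^ (m * x) = 1] (mod n)"
    using cong_pow[OF assms(1), of x] by (simp add: power_mult)
  finally have "[a ^ (k * y) * a ^ gcd m k = 1] (mod n)" .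
  moreover have "[a ^ (k * y) * a ^ gcd m k = 1 * a ^ gcd m k] (mod n)"
    using cong_scalar_right[OF cong_pow[OF assms(2), of y]] by (simp add: power_mult)
  ultimately show ?thesis by (metis cong_sym cong_trans mult_1)
qed (use assms in simp)

lemma prime_dvd_power_gcd_sub_one:
  fixes p q :: nat
  assumes "prime q" and "\<not> q dvd p" and "k dvd d" and "q dvd p ^ k - 1"
  shows "q dvd p ^ gcd d (q - 1) - 1"
proof -
  have "p > 0" using assms(2) by (metis dvd_0_right gr0I)
  then have "[p ^ k = 1] (mod q)" using assms(4) by (simp add: cong_altdef_nat)
  then have "[p ^ d = 1] (mod q)"
    using assms(3) by (metis cong_pow dvdE power_mult power_one)
  then have "[p ^ gcd d (q - 1) = 1] (mod q)"
    using cong_power_gcd_eq_one fermat_theorem[OF assms(1,2)] by blast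
  with \<open>p > 0\<close> show ?thesis by (simp add: cong_altdef_nat)
qed

lemma eq_prime_power_multiplicity:
  fixes n r :: nat
  assumes "n \<noteq> 0" and "prime r" and "\<And>s. prime s \<Longrightarrow> s dvd n \<Longrightarrow> s = r"
  shows "n = r ^ multiplicity r n"
proof -
  have "prime_factors n \<subseteq> {r}"
    using assms by (auto simp: prime_factors_dvd)
  then have "(\<Prod>s \<in> prime_factors n. s ^ multiplicity s n) = (\<Prod>s \<in> {r}. s ^ multiplicity s n)"
    by (intro prod.mono_neutral_left) (auto simp: prime_factors_multiplicity assms(2))
  then show ?thesis using prod_prime_factors[OF assms(1)] by simp
qed

lemma not_dvd_power_multiplicity_sub_one_cancel:
  fixes p q r j m :: nat
  assumes "prime q" and "prime r" and "m \<noteq> 0"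
    and "\<not> p dvd q ^ multiplicity q (m * r ^ j) - 1"
    and "r = q \<Longrightarrow> p dvd q ^ j - 1"
  shows "\<not> p dvd q ^ multiplicity q m - 1"
proof -
  have mult: "multiplicity q (m * r ^ j) = multiplicity q m + multiplicity q (r ^ j)"
    using assms(1-3) by (simp add: prime_elem_multiplicity_mult_distrib prime_gt_0_nat)
  show ?thesis
  proof (cases "r = q")
    case True
    then show ?thesis
      using assms(1,4,5) mult dvd_power_add_sub_one by (metis multiplicity_prime_power prime_imp_prime_elem)
  next
    case False
    then have "multiplicity q (r ^ j) = 0"
      using assms(1,2) by (simp add: prime_elem_multiplicity_power_distrib prime_multiplicity_other)
    then show ?thesis using assms(4) mult by simp
  qed
qed

lemma dvd_if_not_dvd_power_multiplicity_sub_one: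
  fixes p q n :: nat
  assumes "\<not> p dvd q ^ multiplicity q n - 1"
  shows "q dvd n"
  using assms not_dvd_imp_multiplicity_0[of q n] by fastforce

lemma (in group) card_subgroup_dvd:
  assumes "subgroup H G" and "subgroup K G" and "H \<subseteq> K"
  shows "card H dvd card K"
proof -
  interpret K: group "G\<lparr>carrier := K\<rparr>" using subgroup_imp_group[OF assms(2)] .
  have "card (rcosets\<^bsub>G\<lparr>carrier := K\<rparr>\<^esub> H) * card H = card K"
    using K.lagrange[OF subgroup_incl[OF assms]] by (simp add: order_def)
  then show ?thesis by (metis dvd_triv_right)
qed

lemma (in group) card_div_mult_card_div:
  assumes "subgroup N G" and "subgroup A G" and "subgroup K G" and "N \<subseteq> A" and "A \<subseteq> K"
    and "finite K"
  shows "card K div card N = (card K div card A) * (card A div card N)"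
proof -
  obtain a where a: "card A = card N * a" using card_subgroup_dvd[OF assms(1,2,4)] by (rule dvdE)
  obtain b where b: "card K = card A * b" using card_subgroup_dvd[OF assms(2,3,5)] by (rule dvdE)
  have "card N > 0"
    using finite_subset[OF order_trans[OF assms(4,5)] assms(6)] subgroup.one_closed[OF assms(1)]
    by (auto simp: card_gt_0_iff)
  then show ?thesis using a b by (simp add: mult.assoc)
qed

lemma (in group) ord_dvd_card_subgroup:
  assumes "subgroup H G" and "h \<in> H"
  shows "ord h dvd card H"
proof -
  have h: "h \<in> carrier G" using subgroup.mem_carrier[OF assms] .
  have "generate G {h} \<subseteq> H" using assms generate_subgroup_incl by (metis empty_subsetI insert_subset)
  moreover have "subgroup (generate G {h}) G" using h generate_is_subgroup by simp
  ultimately show ?thesis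
    using card_subgroup_dvd assms(1) generate_pow_card[OF h] by metis
qed

lemma (in group) exists_ord_eq_prime:
  assumes "finite (carrier G)" and "prime t" and "t dvd order G"
  shows "\<exists>x\<in>carrier G. ord x = t"
proof -
  obtain m where "order G = t ^ 1 * m" using assms(3) by auto
  then obtain H where H: "subgroup H G" "card H = t ^ 1"
    using sylow_thm[OF assms(2) is_group _ assms(1)] by blast
  have "H \<noteq> {\<one>}" using H(2) prime_gt_1_nat[OF assms(2)] by auto
  then obtain x where x: "x \<in> H" "x \<noteq> \<one>" using subgroup.one_closed[OF H(1)] by auto
  have xG: "x \<in> carrier G" using subgroup.mem_carrier[OF H(1) x(1)] .
  have "ord x dvd t" using ord_dvd_card_subgroup[OF H(1) x(1)] H(2) by simp
  moreover have "ord x \<noteq> 1" using ord_eq_1[OF xG] x(2) by simp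
  ultimately have "ord x = t" using assms(2) by (auto simp: prime_nat_iff)
  then show ?thesis using xG by blast
qed

lemma (in group) exists_nat_pow_ord_eq:
  assumes "finite (carrier G)" and "x \<in> carrier G" and "d dvd ord x"
  shows "\<exists>k::nat. ord (x [^] k) = d"
proof -
  obtain c where c: "ord x = d * c" using assms(3) by blast
  have "ord x \<noteq> 0" using ord_ge_1[OF assms(1,2)] by simp
  then have "ord (x [^] c) = d" using ord_pow[OF assms(2), of c] c by simp
  then show ?thesis by blast
qed

lemma (in group) ord_pow_dvd_ord:
  assumes "x \<in> carrier G"
  shows "ord (x [^] (k::nat)) dvd ord x"
  using assms by (simp add: ord_pow_gen div_dvd_iff_mult)

lemma (in group) ord_mult_of_coprime:
  assumes "x \<otimes> y = y \<otimes> x" and x: "x \<in> carrier G" and y: "y \<in> carrier G"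
    and "coprime (ord x) (ord y)"
  shows "ord (x \<otimes> y) = ord x * ord y"
proof (rule dvd_antisym)
  show "ord (x \<otimes> y) dvd ord x * ord y" using ord_mul_divides[OF assms(1-3)] .
  have "(x \<otimes> y) [^] ord x = y [^] ord x" and "(x \<otimes> y) [^] ord y = x [^] ord y"
    using pow_mult_distrib[OF assms(1-3)] x y by simp_all
  moreover have "ord (y [^] ord x) = ord y" and "ord (x [^] ord y) = ord x"
    using assms(4) x y by (auto simp: ord_pow_gen coprime_iff_gcd_eq_1 gcd.commute)
  ultimately have "ord y dvd ord (x \<otimes> y)" and "ord x dvd ord (x \<otimes> y)"
    using ord_pow_dvd_ord[of "x \<otimes> y"] x y by (metis m_closed)+
  then show "ord x * ord y dvd ord (x \<otimes> y)" using assms(4) by (simp add: divides_mult)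
qed

lemma (in group_hom) ord_hom_dvd:
  assumes "x \<in> carrier G"
  shows "H.ord (h x) dvd G.ord x"
proof -
  have "h x [^]\<^bsub>H\<^esub> G.ord x = \<one>\<^bsub>H\<^esub>"
    using assms by (simp flip: hom_nat_pow)
  then show ?thesis using assms H.pow_eq_id by simp
qed

lemma (in group) card_Union_rcosets:
  assumes "finite (carrier G)" and "subgroup H G" and "A \<subseteq> rcosets H"
  shows "card (\<Union>A) = card A * card H"
proof -
  have "finite A" using assms rcosets_subset_PowG finite_subset by (metis finite_Pow_iff)
  have "card H * card A = card (\<Union>A)"
  proof (rule card_partition)
    show "finite (\<Union>A)" using assms rcosets_part_G finite_subset by (metis Union_mono)
    show "\<And>c. c \<in> A \<Longrightarrow> card c = card H"
      using assms card_rcosets_equal subgroup.subset by (metis subsetD)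
    show "\<And>c1 c2. c1 \<in> A \<Longrightarrow> c2 \<in> A \<Longrightarrow> c1 \<noteq> c2 \<Longrightarrow> c1 \<inter> c2 = {}"
      using pairwise_subset[OF rcos_disjoint[OF assms(2)] assms(3)] by (auto simp: pairwise_def disjnt_def)
  qed fact
  then show ?thesis by (simp add: mult.commute)
qed

lemma (in group) Union_rcosets_subgroup:
  assumes "subgroup H G" and "subgroup K G" and "H \<subseteq> K"
  shows "\<Union>((\<lambda>x. H #> x) ` K) = K"
proof
  show "\<Union>((\<lambda>x. H #> x) ` K) \<subseteq> K"
    using assms by (auto simp: r_coset_def intro: subgroup.m_closed)
  show "K \<subseteq> \<Union>((\<lambda>x. H #> x) ` K)"
  proof
    fix k assume "k \<in> K"
    then have "k \<in> H #> k" by (rule rcos_self[OF subgroup.mem_carrier[OF assms(2)] assms(1)])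
    with \<open>k \<in> K\<close> show "k \<in> \<Union>((\<lambda>x. H #> x) ` K)" by blast
  qed
qed

lemma (in normal) rcoset_group_hom: "group_hom G (G Mod H) (\<lambda>x. H #> x)"
  using r_coset_hom_Mod by (simp add: group_hom_def group_hom_axioms_def is_group factorgroup_is_group)

lemma (in normal) order_FactGroup:
  assumes "finite (carrier G)"
  shows "order (G Mod H) = order G div card H"
proof -
  have "H \<noteq> {}" using subgroup.one_closed[OF subgroup_axioms] by blast
  then have "card H > 0" using finite_subset[OF subset assms] by (simp add: card_gt_0_iff)
  moreover have "order (G Mod H) * card H = order G"
    using lagrange[OF subgroup_axioms] by (simp add: order_def FactGroup_def)
  ultimately show ?thesis by (metis nonzero_mult_div_cancel_right not_gr0)
qed

lemma (in normal) Union_normal_of_quotient: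
  assumes "finite (carrier G)" and "S \<lhd> G Mod H"
  shows "\<Union>S \<lhd> G" and "H \<subseteq> \<Union>S" and "card (\<Union>S) = card S * card H"
proof -
  show "\<Union>S \<lhd> G" using factgroup_subgroup_union_normal[OF assms(2)] .
  show "H \<subseteq> \<Union>S" using subgroup.one_closed[OF normal_imp_subgroup[OF assms(2)]] by auto
  have "S \<subseteq> rcosets H"
    using subgroup.subset[OF normal_imp_subgroup[OF assms(2)]] by (simp add: FactGroup_def)
  then show "card (\<Union>S) = card S * card H"
    using card_Union_rcosets[OF assms(1) subgroup_axioms] by blast
qed

lemma (in normal) ord_dvd_lift:
  assumes "x \<in> carrier (G Mod H)" and "d dvd group.ord (G Mod H) x"
  shows "\<exists>g\<in>carrier G. d dvd ord g"
proof -
  obtain g where g: "g \<in> carrier G" "x = H #> g" using assms(1) by (auto simp: carrier_FactGroup)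
  then have "group.ord (G Mod H) x dvd ord g" using group_hom.ord_hom_dvd[OF rcoset_group_hom] by blast
  then show ?thesis using assms(2) g(1) dvd_trans by blast
qed

section \<open>Conjugation on a normal prime-power subgroup\<close>

lemma (in group_action) prime_dvd_card_if_fixed_point_free:
  assumes "finite E" and "prime t" and "order G = t ^ n"
    and fixed_point_free: "\<And>x. x \<in> E \<Longrightarrow> \<exists>g\<in>carrier G. \<phi> g x \<noteq> x"
  shows "t dvd card E"
proof -
  have "t dvd card orb" if orb: "orb \<in> orbits G E \<phi>" for orb
  proof -
    obtain x where x: "x \<in> E" "orb = orbit G \<phi> x" using orb unfolding orbits_def by blast
    have "card orb dvd t ^ n" using orbit_stabilizer_theorem[OF x(1)] x(2) assms(3) by (metis dvd_triv_left)
    then obtain i where i: "card orb = t ^ i" using divides_primepow_nat[OF assms(2)] by blast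
    have "i \<noteq> 0"
    proof
      assume "i = 0"
      then have "orb = {x}" using i x orbit_refl by (metis card_1_singletonE power_0 singletonD)
      moreover obtain g where "g \<in> carrier G" "\<phi> g x \<noteq> x" using fixed_point_free[OF x(1)] by blast
      ultimately show False using x(2) unfolding orbit_def by blast
    qed
    then show ?thesis using i by simp
  qed
  then have "t dvd (\<Sum>orb \<in> orbits G E \<phi>. card orb)" by (rule dvd_sum)
  also have "(\<Sum>orb \<in> orbits G E \<phi>. card orb) = card E"
    using disjoint_sum[OF assms(1), of "\<lambda>_. 1"] by (simp only: card_eq_sum[abs_def])
  finally show ?thesis .
qed

lemma (in group_action) restrict_action:
  assumes "F \<subseteq> E" and invariant: "\<And>g x. g \<in> carrier G \<Longrightarrow> x \<in> F \<Longrightarrow> \<phi> g x \<in> F"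
  shows "group_action G F (\<lambda>g. restrict (\<phi> g) F)"
proof -
  interpret group G using group_hom group_hom.axioms(1) by blast
  have Bij: "restrict (\<phi> g) F \<in> Bij F" if g: "g \<in> carrier G" for g
  proof -
    have "F \<subseteq> \<phi> g ` F"
    proof
      fix y assume "y \<in> F"
      then have "\<phi> (inv g) y \<in> F" and "\<phi> g (\<phi> (inv g) y) = y"
        using invariant orbit_sym_aux[of "inv g" y] g assms(1) by auto
      then show "y \<in> \<phi> g ` F" by force
    qed
    then have "bij_betw (\<phi> g) F F"
      using inj_prop[OF g] assms(1) invariant[OF g] by (auto simp: bij_betw_def intro: inj_on_subset)
    then show ?thesis by (simp add: Bij_def)
  qed
  have "restrict (\<phi> (g \<otimes> h)) F = compose F (restrict (\<phi> g) F) (restrict (\<phi> h) F)"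
    if "g \<in> carrier G" "h \<in> carrier G" for g h
    using that assms(1) invariant composition_rule by (auto simp: compose_def fun_eq_iff)
  with Bij have "(\<lambda>g. restrict (\<phi> g) F) \<in> hom G (BijGroup F)"
    by (auto simp: hom_def BijGroup_def)
  then show ?thesis
    by (simp add: group_action_def group_hom_def group_hom_axioms_def group_BijGroup is_group)
qed

lemma (in group) conj_eq_one_iff:
  assumes "g \<in> carrier G" and "x \<in> carrier G"
  shows "g \<otimes> x \<otimes> inv g = \<one> \<longleftrightarrow> x = \<one>"
proof
  assume "g \<otimes> x \<otimes> inv g = \<one>"
  then have "g \<otimes> x = g \<otimes> \<one>" using assms by (simp add: inv_solve_right')
  then show "x = \<one>" using assms l_cancel by (metis one_closed)
qed (use assms in simp)

lemma (in group) conjugation_action_on_normal: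
  assumes "N \<lhd> G" and "subgroup H G"
  shows "group_action (G\<lparr>carrier := H\<rparr>) (N - {\<one>}) (\<lambda>g. \<lambda>x \<in> N - {\<one>}. g \<otimes> x \<otimes> inv g)"
proof -
  have N: "N \<subseteq> carrier G" using assms(1) normal_imp_subgroup subgroup.subset by blast
  have "group_action (G\<lparr>carrier := H\<rparr>) (N - {\<one>})
          (\<lambda>g. restrict (\<lambda>x \<in> carrier G. g \<otimes> x \<otimes> inv g) (N - {\<one>}))"
  proof (rule group_action.restrict_action)
    show "group_action (G\<lparr>carrier := H\<rparr>) (carrier G) (\<lambda>g. \<lambda>x \<in> carrier G. g \<otimes> x \<otimes> inv g)"
      using group_action.induced_action[OF action_by_conjugation assms(2)] .
    fix g x assume "g \<in> carrier (G\<lparr>carrier := H\<rparr>)" and x: "x \<in> N - {\<one>}"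
    then have g: "g \<in> carrier G" using subgroup.mem_carrier[OF assms(2)] by simp
    have "g \<otimes> x \<otimes> inv g \<noteq> \<one>" using g x N by (auto simp: conj_eq_one_iff)
    then show "(\<lambda>x \<in> carrier G. g \<otimes> x \<otimes> inv g) x \<in> N - {\<one>}"
      using normal.inv_op_closed2[OF assms(1) g] x N by auto
  qed (use N in auto)
  moreover have "restrict (\<lambda>x \<in> carrier G. g \<otimes> x \<otimes> inv g) (N - {\<one>}) = (\<lambda>x \<in> N - {\<one>}. g \<otimes> x \<otimes> inv g)" for g
    using N by (auto simp: fun_eq_iff)
  ultimately show ?thesis by simp
qed

lemma (in group) prime_ord_dvd_card_sub_one_if_fixed_point_free:
  assumes "finite (carrier G)" and "S \<lhd> G" and y: "y \<in> carrier G" "ord y = t" and "prime t"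
    and fixed_point_free: "\<And>z. z \<in> S - {\<one>} \<Longrightarrow> y \<otimes> z \<otimes> inv y \<noteq> z"
  shows "t dvd card S - 1"
proof -
  let ?Y = "generate G {y}"
  have "group_action (G\<lparr>carrier := ?Y\<rparr>) (S - {\<one>}) (\<lambda>g. \<lambda>x \<in> S - {\<one>}. g \<otimes> x \<otimes> inv g)"
    using conjugation_action_on_normal[OF assms(2) generate_is_subgroup[of "{y}"]] y(1) by simp
  then have "t dvd card (S - {\<one>})"
  proof (rule group_action.prime_dvd_card_if_fixed_point_free)
    show "finite (S - {\<one>})"
      using finite_subset[OF subgroup.subset[OF normal_imp_subgroup[OF assms(2)]] assms(1)] by simp
    show "order (G\<lparr>carrier := ?Y\<rparr>) = t ^ 1"
      using generate_pow_card[OF y(1)] y(2) by (simp add: order_def)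
    have y_in: "y \<in> carrier (G\<lparr>carrier := ?Y\<rparr>)" by (simp add: generate.incl)
    show "\<exists>g\<in>carrier (G\<lparr>carrier := ?Y\<rparr>). (\<lambda>x \<in> S - {\<one>}. g \<otimes> x \<otimes> inv g) x \<noteq> x"
      if "x \<in> S - {\<one>}" for x
      using fixed_point_free that by (intro bexI[OF _ y_in]) auto
  qed fact
  then show ?thesis
    using subgroup.one_closed[OF normal_imp_subgroup[OF assms(2)]] by (simp add: card_Diff_singleton)
qed

lemma (in group) mixed_order_or_dvd_power_sub_one:
  assumes "finite (carrier G)" and S: "S \<lhd> G" "card S = s ^ j"
    and "prime s" and "prime t" and "s \<noteq> t" and "t dvd order G"
  shows "t dvd s ^ j - 1 \<or> (\<exists>w\<in>carrier G. s * t dvd ord w)"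
proof -
  obtain y where y: "y \<in> carrier G" "ord y = t" using exists_ord_eq_prime[OF assms(1,5,7)] by blast
  show ?thesis
  proof (cases "\<exists>z \<in> S - {\<one>}. y \<otimes> z \<otimes> inv y = z")
    case True
    then obtain z where z: "z \<in> S" "z \<noteq> \<one>" "y \<otimes> z \<otimes> inv y = z" by blast
    have Ssub: "subgroup S G" using S(1) normal_imp_subgroup by blast
    then have zG: "z \<in> carrier G" using subgroup.mem_carrier z(1) by metis
    have comm: "z \<otimes> y = y \<otimes> z" using z(3) zG y(1) by (simp add: inv_solve_right')
    obtain i where i: "ord z = s ^ i"
      using ord_dvd_card_subgroup[OF Ssub z(1)] S(2) divides_primepow_nat[OF assms(4)] by auto
    have "i \<noteq> 0" using i ord_eq_1[OF zG] z(2) by auto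
    have "coprime (ord z) (ord y)" using i y(2) assms(4-6) by (simp add: primes_coprime)
    then have "ord (z \<otimes> y) = s ^ i * t" using ord_mult_of_coprime[OF comm zG y(1)] i y(2) by simp
    then have "s * t dvd ord (z \<otimes> y)" using \<open>i \<noteq> 0\<close> by (simp add: dvd_power)
    then show ?thesis using m_closed[OF zG y(1)] by blast
  next
    case False
    then have "t dvd card S - 1"
      using prime_ord_dvd_card_sub_one_if_fixed_point_free[OF assms(1) S(1) y assms(5)] by blast
    then show ?thesis using S(2) by simp
  qed
qed

section \<open>Normal prime-power subgroups of solvable normal subgroups\<close>

lemma (in group) solvable_seq_if_solvable_subgroup:
  assumes "subgroup K G" and "solvable (G\<lparr>carrier := K\<rparr>)"
  shows "solvable_seq G K"
  using group_hom.solvable_imp_solvable_img[OF canonical_inj_is_hom[OF assms(1)]] assms(2)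
  by (simp add: solvable_def)

lemma (in group) commutator_eq_one_imp_commute:
  assumes "a \<in> carrier G" and "b \<in> carrier G" and "a \<otimes> b \<otimes> inv a \<otimes> inv b = \<one>"
  shows "a \<otimes> b = b \<otimes> a"
proof -
  have "a \<otimes> b = (a \<otimes> b \<otimes> inv a \<otimes> inv b) \<otimes> b \<otimes> a" using assms(1,2) by (simp add: m_assoc)
  then show ?thesis using assms by simp
qed

lemma (in group) solvable_normal_contains_abelian_normal:
  assumes "M \<lhd> G" and "solvable_seq G M" and "M \<noteq> {\<one>}"
  shows "\<exists>B. B \<lhd> G \<and> B \<subseteq> M \<and> B \<noteq> {\<one>} \<and> (\<forall>a\<in>B. \<forall>b\<in>B. a \<otimes> b = b \<otimes> a)"
proof -
  obtain n where "(derived G ^^ n) M = {\<one>}"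
    using solvable_imp_trivial_derived_seq[OF assms(2)] by blast
  with assms(1,3) show ?thesis
  proof (induction n arbitrary: M)
    case 0
    then show ?case by simp
  next
    case (Suc n)
    have M: "subgroup M G" using Suc.prems(1) normal_imp_subgroup by blast
    show ?case
    proof (cases "derived G M = {\<one>}")
      case True
      have "a \<otimes> b = b \<otimes> a" if "a \<in> M" "b \<in> M" for a b
      proof (rule commutator_eq_one_imp_commute)
        show "a \<in> carrier G" "b \<in> carrier G" using that subgroup.mem_carrier[OF M] by auto
        have "a \<otimes> b \<otimes> inv a \<otimes> inv b \<in> derived G M"
          unfolding derived_def using that by (blast intro: generate.incl)
        with True show "a \<otimes> b \<otimes> inv a \<otimes> inv b = \<one>" by blast
      qed
      with Suc.prems show ?thesis by blast
    next
      case False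
      have "(derived G ^^ n) (derived G M) = {\<one>}"
        using Suc.prems(3) by (simp only: funpow_Suc_right comp_apply)
      then obtain B where "B \<lhd> G" "B \<subseteq> derived G M" "B \<noteq> {\<one>}" "\<forall>a\<in>B. \<forall>b\<in>B. a \<otimes> b = b \<otimes> a"
        using Suc.IH[OF derived_is_normal[OF Suc.prems(1)] False] by blast
      moreover have "derived G M \<subseteq> M" using derived_incl[OF order_refl M] .
      ultimately show ?thesis by blast
    qed
  qed
qed

lemma (in group) conj_nat_pow:
  assumes "g \<in> carrier G" and "x \<in> carrier G"
  shows "(g \<otimes> x \<otimes> inv g) [^] (n::nat) = g \<otimes> x [^] n \<otimes> inv g"
proof (induction n)
  case (Suc n)
  then show ?case using assms by (simp add: m_assoc inv_solve_left')
qed (use assms in simp)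

lemma (in group) abelian_normal_pow_eq_one_normal:
  assumes "B \<lhd> G" and comm: "\<And>a b. a \<in> B \<Longrightarrow> b \<in> B \<Longrightarrow> a \<otimes> b = b \<otimes> a"
  shows "{x \<in> B. x [^] (n::nat) = \<one>} \<lhd> G"
proof -
  have B: "subgroup B G" using normal_imp_subgroup[OF assms(1)] .
  have "subgroup {x \<in> B. x [^] n = \<one>} G"
  proof (rule subgroupI)
    show "{x \<in> B. x [^] n = \<one>} \<subseteq> carrier G" using subgroup.subset[OF B] by blast
    show "{x \<in> B. x [^] n = \<one>} \<noteq> {}" using subgroup.one_closed[OF B] by auto
  next
    fix a assume "a \<in> {x \<in> B. x [^] n = \<one>}"
    then show "inv a \<in> {x \<in> B. x [^] n = \<one>}"
      using subgroup.m_inv_closed[OF B] subgroup.mem_carrier[OF B] by (auto simp: nat_pow_inv)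
  next
    fix a c assume "a \<in> {x \<in> B. x [^] n = \<one>}" "c \<in> {x \<in> B. x [^] n = \<one>}"
    then show "a \<otimes> c \<in> {x \<in> B. x [^] n = \<one>}"
      using subgroup.m_closed[OF B] subgroup.mem_carrier[OF B] comm by (auto simp: pow_mult_distrib)
  qed
  moreover have "g \<otimes> h \<otimes> inv g \<in> {x \<in> B. x [^] n = \<one>}"
    if "g \<in> carrier G" "h \<in> {x \<in> B. x [^] n = \<one>}" for g h
    using that normal.inv_op_closed2[OF assms(1)] subgroup.mem_carrier[OF B] by (auto simp: conj_nat_pow)
  ultimately show ?thesis by (simp add: normal_inv_iff)
qed

lemma (in group) order_eq_prime_power_if_exponent:
  assumes "finite (carrier G)" and "prime r" and "\<And>x. x \<in> carrier G \<Longrightarrow> x [^] r = \<one>"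
  shows "order G = r ^ multiplicity r (order G)"
proof (rule eq_prime_power_multiplicity)
  show "order G \<noteq> 0" using assms(1) order_gt_0_iff_finite by simp
  fix s assume s: "prime s" "s dvd order G"
  then obtain x where "x \<in> carrier G" "ord x = s" using exists_ord_eq_prime assms(1) by blast
  then have "s dvd r" using assms(3) pow_eq_id by blast
  then show "s = r" using s(1) assms(2) primes_dvd_imp_eq by blast
qed fact

lemma (in group) abelian_normal_contains_prime_power_normal:
  assumes "finite (carrier G)" and B: "B \<lhd> G" "B \<noteq> {\<one>}"
    and comm: "\<And>a b. a \<in> B \<Longrightarrow> b \<in> B \<Longrightarrow> a \<otimes> b = b \<otimes> a"
  shows "\<exists>S r j. S \<lhd> G \<and> S \<subseteq> B \<and> prime r \<and> j \<ge> 1 \<and> card S = r ^ j"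
proof -
  have Bsub: "subgroup B G" using normal_imp_subgroup[OF B(1)] .
  obtain b where b: "b \<in> B" "b \<noteq> \<one>" using B(2) subgroup.one_closed[OF Bsub] by auto
  have bG: "b \<in> carrier G" using subgroup.mem_carrier[OF Bsub b(1)] .
  obtain r where r: "prime r" "r dvd ord b" using ord_eq_1[OF bG] b(2) prime_factor_nat by metis
  obtain k :: nat where k: "ord (b [^] k) = r" using exists_nat_pow_ord_eq[OF assms(1) bG r(2)] by blast
  have "b [^] k \<in> B" using subgroup_int_pow_closed[OF Bsub b(1), of "int k"] by (simp add: int_pow_int)
  define S where "S = {x \<in> B. x [^] r = \<one>}"
  have "S \<lhd> G" unfolding S_def using abelian_normal_pow_eq_one_normal[OF B(1) comm] .
  then have S: "subgroup S G" by (rule normal_imp_subgroup)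
  interpret S: group "G\<lparr>carrier := S\<rparr>" using subgroup_imp_group[OF S] .
  have "finite S" using finite_subset[OF subgroup.subset[OF S] assms(1)] .
  moreover have "x [^]\<^bsub>G\<lparr>carrier := S\<rparr>\<^esub> r = \<one>\<^bsub>G\<lparr>carrier := S\<rparr>\<^esub>"
    if "x \<in> carrier (G\<lparr>carrier := S\<rparr>)" for x
    using that unfolding S_def by (simp flip: nat_pow_consistent)
  ultimately have card_S: "card S = r ^ multiplicity r (card S)"
    using S.order_eq_prime_power_if_exponent[OF _ r(1)] by (simp add: order_def)
  have "b [^] k \<in> S" "b [^] k \<noteq> \<one>"
    using \<open>b [^] k \<in> B\<close> pow_ord_eq_1[of "b [^] k"] k bG prime_gt_1_nat[OF r(1)] unfolding S_def by auto
  have "card S \<noteq> 1"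
  proof
    assume "card S = 1"
    then obtain a where "S = {a}" by (rule card_1_singletonE)
    with subgroup.one_closed[OF S] \<open>b [^] k \<in> S\<close> \<open>b [^] k \<noteq> \<one>\<close> show False by auto
  qed
  then have "multiplicity r (card S) \<ge> 1" using card_S by (metis less_one not_le power_0)
  moreover have "S \<subseteq> B" unfolding S_def by blast
  ultimately show ?thesis using \<open>S \<lhd> G\<close> card_S r(1) by blast
qed

lemma (in group) solvable_normal_contains_prime_power_normal:
  assumes "finite (carrier G)" and "M \<lhd> G" and "solvable_seq G M" and "M \<noteq> {\<one>}"
  shows "\<exists>S r j. S \<lhd> G \<and> S \<subseteq> M \<and> prime r \<and> j \<ge> 1 \<and> card S = r ^ j"
proof -
  obtain B where B: "B \<lhd> G" "B \<subseteq> M" "B \<noteq> {\<one>}" "\<forall>a\<in>B. \<forall>b\<in>B. a \<otimes> b = b \<otimes> a"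
    using solvable_normal_contains_abelian_normal[OF assms(2-4)] by blast
  then obtain S r j where "S \<lhd> G" "S \<subseteq> B" "prime r" "j \<ge> 1" "card S = r ^ j"
    using abelian_normal_contains_prime_power_normal[OF assms(1) B(1,3)] by blast
  with B(2) show ?thesis by blast
qed

lemma (in group) prime_power_normal_subgroup_of_quotient:
  assumes "finite (carrier G)" and K: "K \<lhd> G" "solvable_seq G K" and N: "N \<lhd> G" "N \<subseteq> K" "N \<noteq> K"
  shows "\<exists>S r j. S \<lhd> G Mod N \<and> \<Union>S \<subseteq> K \<and> prime r \<and> j \<ge> 1 \<and> card S = r ^ j"
proof -
  interpret N: normal N G by (rule N(1))
  interpret Q: group "G Mod N" by (rule N.factorgroup_is_group)
  note hom = N.rcoset_group_hom
  have surj: "(\<lambda>x. N #> x) ` carrier G = carrier (G Mod N)" by (simp add: carrier_FactGroup)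
  define M where "M = (\<lambda>x. N #> x) ` K"
  have M: "M \<lhd> G Mod N" unfolding M_def using normal.surj_hom_normal_subgroup[OF K(1) hom surj] .
  have "solvable_seq (G Mod N) M" unfolding M_def using group_hom.solvable_imp_solvable_img[OF hom K(2)] .
  have UM: "\<Union>M = K"
    unfolding M_def using Union_rcosets_subgroup[OF N.subgroup_axioms normal_imp_subgroup[OF K(1)] N(2)] .
  then have "M \<noteq> {\<one>\<^bsub>G Mod N\<^esub>}" using N(3) by auto
  moreover have "finite (carrier (G Mod N))" using surj assms(1) finite_imageI by metis
  ultimately obtain S r j where "S \<lhd> G Mod N" "S \<subseteq> M" "prime r" "j \<ge> 1" "card S = r ^ j"
    using Q.solvable_normal_contains_prime_power_normal[OF _ M \<open>solvable_seq (G Mod N) M\<close>] by blast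
  moreover have "\<Union>S \<subseteq> K" using \<open>S \<subseteq> M\<close> UM by blast
  ultimately show ?thesis by blast
qed

section \<open>Elements of order \<open>p * q\<close>\<close>

lemma (in group) index_conditions_descend:
  assumes "finite (carrier G)" and "subgroup N G" "subgroup A G" "subgroup K G" "N \<subseteq> A" "A \<subseteq> K"
    and "card A = r ^ j * card N" and "prime p" "prime q" "prime r" "r \<noteq> p"
    and "r = q \<Longrightarrow> p dvd q ^ j - 1"
    and "p dvd card K div card N" and "\<not> p dvd q ^ multiplicity q (order G div card N) - 1"
  shows "p dvd card K div card A" and "\<not> p dvd q ^ multiplicity q (order G div card A) - 1"
proof -
  have K: "finite K" using finite_subset[OF subgroup.subset[OF assms(4)] assms(1)] .
  have "card N > 0"
    using finite_subset[OF order_trans[OF assms(5,6)] K] subgroup.one_closed[OF assms(2)]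
    by (auto simp: card_gt_0_iff)
  then have "card A div card N = r ^ j" using assms(7) by simp
  then have index_K: "card K div card N = (card K div card A) * r ^ j"
    and index_G: "order G div card N = (order G div card A) * r ^ j"
    using card_div_mult_card_div[OF assms(2,3,4,5,6) K]
      card_div_mult_card_div[OF assms(2,3) subgroup_self assms(5) subgroup.subset[OF assms(3)] assms(1)]
    by (simp_all add: order_def)
  have "\<not> p dvd r ^ j" using assms(8,10,11) prime_dvd_power primes_dvd_imp_eq by metis
  then show "p dvd card K div card A" using assms(13) index_K prime_dvd_mult_iff[OF assms(8)] by auto
  have "card A \<le> order G" "card A > 0"
    using card_mono[OF assms(1) subgroup.subset[OF assms(3)]] assms(7) \<open>card N > 0\<close>
      prime_gt_0_nat[OF assms(10)] by (simp_all add: order_def)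
  then have "order G div card A \<noteq> 0" by (simp add: div_eq_0_iff)
  then show "\<not> p dvd q ^ multiplicity q (order G div card A) - 1"
    using not_dvd_power_multiplicity_sub_one_cancel[OF assms(9,10) _ _ assms(12)] assms(14) index_G by simp
qed

lemma (in group) mixed_order_or_descent:
  assumes fin: "finite (carrier G)" and K: "K \<lhd> G" "solvable_seq G K"
    and p: "prime p" and q: "prime q" and "p \<noteq> q"
    and no_q_p: "\<And>k. 1 \<le> k \<Longrightarrow> k \<le> multiplicity p (order G) \<Longrightarrow> \<not> q dvd p ^ k - 1"
    and N: "N \<lhd> G" "N \<subseteq> K" and p_K: "p dvd card K div card N"
    and p_q: "\<not> p dvd q ^ multiplicity q (order G div card N) - 1"
  shows "(\<exists>g\<in>carrier G. p * q dvd ord g) \<or>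
    (\<exists>A. A \<lhd> G \<and> A \<subseteq> K \<and> card N < card A \<and> p dvd card K div card A \<and>
         \<not> p dvd q ^ multiplicity q (order G div card A) - 1)"
proof -
  interpret N: normal N G by (rule N(1))
  interpret Q: group "G Mod N" by (rule N.factorgroup_is_group)
  have fin_Q: "finite (carrier (G Mod N))" using fin by (simp add: carrier_FactGroup)
  have "card N > 0" using finite_subset[OF N.subset fin] N.one_closed card_gt_0_iff by blast
  then have "N \<noteq> K" using p_K p by auto
  then obtain S r j where S: "S \<lhd> G Mod N" "\<Union>S \<subseteq> K" "prime r" "j \<ge> 1" "card S = r ^ j"
    using prime_power_normal_subgroup_of_quotient[OF fin K N(1,2)] by blast
  define A where "A = \<Union>S"
  have A: "A \<lhd> G" "N \<subseteq> A" "A \<subseteq> K" "card A = r ^ j * card N"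
    unfolding A_def using N.Union_normal_of_quotient[OF fin S(1)] S(2,5) by auto
  have subgroups: "subgroup A G" "subgroup K G" using A(1) K(1) normal_imp_subgroup by blast+
  have "card N < card A"
    using A(4) \<open>card N > 0\<close> one_less_power[OF prime_gt_1_nat[OF S(3)]] S(4) by simp
  then have descend: ?thesis if "r \<noteq> p" and "r = q \<Longrightarrow> p dvd q ^ j - 1"
    using index_conditions_descend[OF fin N.subgroup_axioms subgroups A(2-4) p q S(3) that p_K p_q] A(1,3)
    by blast
  consider "r = p" | "r = q" | "r \<noteq> p" "r \<noteq> q" by blast
  then show ?thesis
  proof cases
    case 1
    have "p ^ j dvd order G"
      using card_subgroup_dvd[OF subgroups(1) subgroup_self subgroup.subset[OF subgroups(1)]] A(4) 1
      by (auto simp: order_def intro: dvd_mult_left)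
    then have "j \<le> multiplicity p (order G)"
      using fin order_gt_0_iff_finite p by (intro multiplicity_geI) auto
    then have "\<not> q dvd p ^ j - 1" using no_q_p[OF S(4)] by blast
    moreover have "q dvd order (G Mod N)"
      using dvd_if_not_dvd_power_multiplicity_sub_one[OF p_q] N.order_FactGroup[OF fin] by simp
    ultimately obtain w where "w \<in> carrier (G Mod N)" "p * q dvd Q.ord w"
      using Q.mixed_order_or_dvd_power_sub_one[OF fin_Q S(1,5,3) q] 1 \<open>p \<noteq> q\<close> by auto
    then show ?thesis using N.ord_dvd_lift by blast
  next
    case 2
    have "card K div card N dvd order G div card N"
      using card_div_mult_card_div[OF N.subgroup_axioms subgroups(2) subgroup_self N(2) subgroup.subset[OF subgroups(2)] fin]
      by (simp add: order_def)
    then have "p dvd order (G Mod N)" using p_K N.order_FactGroup[OF fin] dvd_trans by metis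
    then have "p dvd q ^ j - 1 \<or> (\<exists>w\<in>carrier (G Mod N). p * q dvd Q.ord w)"
      using Q.mixed_order_or_dvd_power_sub_one[OF fin_Q S(1,5,3) p] 2 \<open>p \<noteq> q\<close> by (simp add: mult.commute)
    then show ?thesis using descend 2 \<open>p \<noteq> q\<close> N.ord_dvd_lift by blast
  next
    case 3
    then show ?thesis using descend by blast
  qed
qed

lemma (in group) solvable_normal_mixed_order_element:
  assumes fin: "finite (carrier G)" and K: "K \<lhd> G" "solvable_seq G K"
    and p: "prime p" and q: "prime q" and "p \<noteq> q" and "p dvd card K"
    and no_q_p: "\<And>k. 1 \<le> k \<Longrightarrow> k \<le> multiplicity p (order G) \<Longrightarrow> \<not> q dvd p ^ k - 1"
    and no_p_q: "\<not> p dvd q ^ multiplicity q (order G) - 1"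
  shows "\<exists>g\<in>carrier G. ord g = p * q"
proof -
  \<comment> \<open>The induction runs over normal subgroups \<open>N\<close> of \<open>G\<close> rather than over quotients \<open>G Mod N\<close>,
    whose carrier type differs from that of \<open>G\<close>.\<close>
  have "\<exists>g\<in>carrier G. p * q dvd ord g"
    if "N \<lhd> G" "N \<subseteq> K" "p dvd card K div card N"
      "\<not> p dvd q ^ multiplicity q (order G div card N) - 1" for N
    using that
  proof (induction "order G - card N" arbitrary: N rule: less_induct)
    case less
    have "(\<exists>g\<in>carrier G. p * q dvd ord g) \<or>
      (\<exists>A. A \<lhd> G \<and> A \<subseteq> K \<and> card N < card A \<and> p dvd card K div card A \<and>
           \<not> p dvd q ^ multiplicity q (order G div card A) - 1)"
      by (rule mixed_order_or_descent[OF fin K p q \<open>p \<noteq> q\<close> _ less.prems]) (fact no_q_p)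
    then show ?case
    proof (elim disjE exE conjE)
      fix A assume A: "A \<lhd> G" "A \<subseteq> K" "card N < card A" "p dvd card K div card A"
        "\<not> p dvd q ^ multiplicity q (order G div card A) - 1"
      have "card A \<le> order G"
        using card_mono[OF fin subgroup.subset[OF normal_imp_subgroup[OF A(1)]]] by (simp add: order_def)
      then show ?case using less.hyps[OF _ A(1,2,4,5)] A(3) by simp
    qed
  qed
  from this[OF one_is_normal] obtain g where g: "g \<in> carrier G" "p * q dvd ord g"
    using normal_imp_subgroup[OF K(1)] subgroup.one_closed \<open>p dvd card K\<close> no_p_q by auto
  then obtain k :: nat where "ord (g [^] k) = p * q" using exists_nat_pow_ord_eq[OF fin] by blast
  then show ?thesis using g(1) by blast
qed

lemma (in group) L_set_subset_gk_neighbours: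
  assumes "finite (carrier G)" and "K \<lhd> G" and "solvable_seq G K" and "prime p" and "p dvd card K"
  shows "L_set p G \<subseteq> {q. gk_adj G p q}"
proof
  fix q assume "q \<in> L_set p G"
  then have q: "q \<in> prime_set G" "prime q" "q \<noteq> p"
    and no_p_q: "\<not> p dvd q ^ w_exp G q - 1"
    and no_q_p_gcd: "\<not> q dvd p ^ gcd (lcm_upto (w_exp G p)) (q - 1) - 1"
    unfolding L_set_def prime_set_def by auto
  have "\<not> q dvd p" using q(2,3) assms(4) primes_dvd_imp_eq by blast
  have "\<not> q dvd p ^ k - 1" if "1 \<le> k" "k \<le> w_exp G p" for k
    using prime_dvd_power_gcd_sub_one[OF q(2) \<open>\<not> q dvd p\<close> _ _] no_q_p_gcd that
    unfolding lcm_upto_def by (meson atLeastAtMost_iff dvd_Lcm)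
  then obtain g where "g \<in> carrier G" "ord g = p * q"
    using solvable_normal_mixed_order_element[OF assms(1-4) q(2) _ assms(5)] q(3) no_p_q
    unfolding w_exp_def order_def by fastforce
  moreover have "p \<in> prime_set G"
    using card_subgroup_dvd[OF normal_imp_subgroup[OF assms(2)] subgroup_self] assms(4,5)
      subgroup.subset[OF normal_imp_subgroup[OF assms(2)]] dvd_trans
    unfolding prime_set_def by blast
  ultimately show "q \<in> {q. gk_adj G p q}" unfolding gk_adj_def using q(1,3) by auto
qed

lemma (in group) finite_gk_neighbours:
  assumes "finite (carrier G)"
  shows "finite {q. gk_adj G p q}"
proof (rule finite_subset)
  show "{q. gk_adj G p q} \<subseteq> {..order G}"
    using assms order_gt_0_iff_finite by (auto simp: gk_adj_def prime_set_def order_def dest: dvd_imp_le)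
qed simp

theorem theorem2p7:
  fixes G :: "('a, 'b) monoid_scheme" and K :: "'a set" and p :: nat
  assumes "group G" and "finite (carrier G)"
    and "K \<lhd> G" and "solvable (G\<lparr>carrier := K\<rparr>)"
    and "p \<in> prime_set G"
    and "gk_deg G p < card (L_set p G)"
  shows "p \<notin> prime_set (G\<lparr>carrier := K\<rparr>)"
proof
  assume "p \<in> prime_set (G\<lparr>carrier := K\<rparr>)"
  then have p: "prime p" "p dvd card K" unfolding prime_set_def by simp_all
  interpret group G by fact
  have "solvable_seq G K"
    using solvable_seq_if_solvable_subgroup[OF normal_imp_subgroup[OF assms(3)] assms(4)] .
  then have "L_set p G \<subseteq> {q. gk_adj G p q}"
    using L_set_subset_gk_neighbours[OF assms(2,3) _ p] by blast
  then have "card (L_set p G) \<le> gk_deg G p"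
    unfolding gk_deg_def using card_mono[OF finite_gk_neighbours[OF assms(2)]] by blast
  with assms(6) show False by simp
qed

end
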